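(* Let $(\bm u^{\mathrm d}(t),\bm y^{\mathrm d}(t))_{t=0}^{T-1}$, with $T>1$, be data points each belonging to $\mathscr{B}_{\mathrm{DF}}$, and let $H\doteq\begin{bmatrix}\bm u^{\mathrm d}(0) & \cdots & \bm u^{\mathrm d}(T-1)\\ \bm y^{\mathrm d}(0) & \cdots & \bm y^{\mathrm d}(T-1)\end{bmatrix}\in\mathbb{R}^{(6n+1)\times T}$. Assume $\operatorname{rank} H = 3n+1$. Then a point $(u,y)\in\mathbb{R}^{2n}\times\mathbb{R}^{4n+1}$ with $u=(p,q)$ and $y=(P,Q,\ell,\mathsf v,\mathsf v_0)$ belongs to $\mathscr{B}_{\mathrm{DF}}$ if and only if there exists $g\in\mathbb{R}^{T}$ such that $\begin{bmatrix}u\\ y\end{bmatrix}=Hg$ and $\mathsf v\odot\ell=P\odot P+Q\odot Q$, where $\odot$ denotes the element-wise product.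
   Context: Network: a tree with nodes $\mathcal N=\{0,1,\dots,n\}$ rooted at the slack node $0$; $\mathcal N_+=\{1,\dots,n\}$. Each $i\in\mathcal N_+$ has a unique parent $\pi(i)\in\mathcal N$, and the edge $(i,\pi(i))$ carries resistance $\mathtt r_i\ge 0$ and reactance $\mathtt x_i\ge0$ with $\mathtt r_i^2+\mathtt x_i^2\neq 0$. Variables: nodal net injections $p,q\in\mathbb{R}^n$, branch flows $P,Q\in\mathbb{R}^n$, squared branch currents $\ell\in\mathbb{R}^n$, squared voltage magnitudes $\mathsf v\in\mathbb{R}^n$ at nodes of $\mathcal N_+$, and slack squared voltage $\mathsf v_0\in\mathbb{R}$ (all vectors indexed by $\mathcal N_+$). The DistFlow equations are, for every $i\in\mathcal N_+$ with $j=\pi(i)$: (1) $P_i=p_i+\sum_{k:\pi(k)=i}(P_k-\mathtt r_k\ell_k)$; (2) $Q_i=q_i+\sum_{k:\pi(k)=i}(Q_k-\mathtt x_k\ell_k)$; (3) $\mathsf v_j=\mathsf v_i-2(\mathtt r_iP_i+\mathtt x_iQ_i)+(\mathtt r_i^2+\mathtt x_i^2)\ell_i$ (with $\mathsf v_j=\mathsf v_0$ when $j=0$); (4) $\ell_i\mathsf v_i=P_i^2+Q_i^2$. Input $u=(p,q)\in\mathbb{R}^{2n}$, output $y=(P,Q,\ell,\mathsf v,\mathsf v_0)\in\mathbb{R}^{4n+1}$ (vertical stacking in this order). $\mathscr{B}_{\mathrm{DF}}\subset\mathbb{R}^{2n}\times\mathbb{R}^{4n+1}$ is the set of all $(u,y)$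 satisfying (1)–(4). *)

theory Defs
  imports "Jordan_Normal_Form.DL_Rank"
begin

text \<open>Radial network: nodes 0..n, root 0; par i is the parent of node i (1 \<le> i \<le> n).\<close>
definition is_tree :: "nat \<Rightarrow> (nat \<Rightarrow> nat) \<Rightarrow> bool" where
  "is_tree n par \<longleftrightarrow> (\<forall>i\<in>{1..n}. par i \<le> n \<and> (\<exists>k. (par ^^ k) i = 0))"

definition line_params :: "nat \<Rightarrow> (nat \<Rightarrow> real) \<Rightarrow> (nat \<Rightarrow> real) \<Rightarrow> bool" where
  "line_params n r x \<longleftrightarrow> (\<forall>i\<in>{1..n}. r i \<ge> 0 \<and> x i \<ge> 0 \<and> (r i)^2 + (x i)^2 \<noteq> 0)"

text \<open>Components of u = (p,q) \<in> R^(2n) and y = (P,Q,l,v,v0) \<in> R^(4n+1), indexed by nodes 1..n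
  (vectors are 0-indexed in Jordan_Normal_Form).\<close>
definition pp :: "nat \<Rightarrow> real vec \<Rightarrow> nat \<Rightarrow> real" where "pp n u i = u $ (i - 1)"
definition qq :: "nat \<Rightarrow> real vec \<Rightarrow> nat \<Rightarrow> real" where "qq n u i = u $ (n + i - 1)"
definition PP :: "nat \<Rightarrow> real vec \<Rightarrow> nat \<Rightarrow> real" where "PP n y i = y $ (i - 1)"
definition QQ :: "nat \<Rightarrow> real vec \<Rightarrow> nat \<Rightarrow> real" where "QQ n y i = y $ (n + i - 1)"
definition LL :: "nat \<Rightarrow> real vec \<Rightarrow> nat \<Rightarrow> real" where "LL n y i = y $ (2*n + i - 1)"
definition VV :: "nat \<Rightarrow> real vec \<Rightarrow> nat \<Rightarrow> real" where "VV n y i = y $ (3*n + i - 1)"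
definition V0 :: "nat \<Rightarrow> real vec \<Rightarrow> real" where "V0 n y = y $ (4*n)"

text \<open>Squared voltage at node j, with node 0 the slack node.\<close>
definition volt :: "nat \<Rightarrow> real vec \<Rightarrow> nat \<Rightarrow> real" where
  "volt n y j = (if j = 0 then V0 n y else VV n y j)"

definition B_DF :: "nat \<Rightarrow> (nat \<Rightarrow> nat) \<Rightarrow> (nat \<Rightarrow> real) \<Rightarrow> (nat \<Rightarrow> real) \<Rightarrow> (real vec \<times> real vec) set" where
  "B_DF n par r x = {(u, y). u \<in> carrier_vec (2*n) \<and> y \<in> carrier_vec (4*n+1) \<and>
     (\<forall>i\<in>{1..n}.
        PP n y i = pp n u i + (\<Sum>k\<in>{k\<in>{1..n}. par k = i}. PP n y k - r k * LL n y k) \<and>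
        QQ n y i = qq n u i + (\<Sum>k\<in>{k\<in>{1..n}. par k = i}. QQ n y k - x k * LL n y k) \<and>
        volt n y (par i) = VV n y i - 2 * (r i * PP n y i + x i * QQ n y i)
                            + ((r i)^2 + (x i)^2) * LL n y i \<and>
        LL n y i * VV n y i = (PP n y i)^2 + (QQ n y i)^2)}"

definition data_mat :: "nat \<Rightarrow> nat \<Rightarrow> (nat \<Rightarrow> real vec) \<Rightarrow> (nat \<Rightarrow> real vec) \<Rightarrow> real mat" where
  "data_mat n T ud yd = mat (6*n+1) T (\<lambda>(i, t). (ud t @\<^sub>v yd t) $ i)"

end

theory Submission
  imports Defs
begin

(* The DistFlow equations (1)-(3) are linear in the stacked vector w = (p, q, P, Q, l, v, v0),
  so they cut out a linear subspace L of R^(6n+1), and B_DF is the intersection of L with the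
  quadric (4). On L the 3n+1 coordinates (P, Q, l, v0) determine all others: (1) and (2) give
  p and q, and (3), read from the root towards the leaves, gives v. Hence dim L <= 3n+1. The
  columns of H lie in L and span a space of dimension rank H = 3n+1, so they span L. *)

lemma index_mult_mat_vec_sum:
  fixes A :: "'a::comm_semiring_0 mat"
  assumes "A \<in> carrier_mat nr nc" and "a \<in> carrier_vec nc" and "m < nr"
  shows "(A *\<^sub>v a) $ m = (\<Sum>j<nc. a $ j * col A j $ m)"
  using assms by (auto simp: scalar_prod_def lessThan_atLeast0 intro!: sum.cong) (simp add: mult.commute)

lemma rank_obtains_injective_col_submatrix:
  fixes H :: "'a::field mat"
  assumes H: "H \<in> carrier_mat N T" and rank: "vec_space.rank N H = m"
  obtains K where "K \<in> carrier_mat N m" "set (cols K) \<subseteq> set (cols H)"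
    "\<And>v. v \<in> carrier_vec m \<Longrightarrow> K *\<^sub>v v = 0\<^sub>v N \<Longrightarrow> v = 0\<^sub>v m"
proof -
  interpret V: vec_space "TYPE('a)" N .
  have "V.lin_indpt {}" by (rule V.finite_lin_indpt2) auto
  then obtain S where "maximal S (\<lambda>S. S \<subseteq> set (cols H) \<and> V.lin_indpt S)"
    using maximal_exists_superset[of "set (cols H)" "\<lambda>S. S \<subseteq> set (cols H) \<and> V.lin_indpt S" "{}"]
    by auto
  then have S: "S \<subseteq> set (cols H)" "V.lin_indpt S" "card S = m"
    using V.rank_card_indpt[OF H] rank unfolding maximal_def by auto
  have "finite S" using S(1) finite_subset by blast
  then obtain ss where ss: "distinct ss" "set ss = S" using finite_distinct_list by blast
  have ss_carrier: "set ss \<subseteq> carrier_vec N" using S(1) ss(2) H cols_dim by blast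
  let ?K = "mat_of_cols N ss"
  have K: "?K \<in> carrier_mat N m" using distinct_card[OF ss(1)] ss(2) S(3) by auto
  have cols_K: "cols ?K = ss" using ss_carrier by simp
  show thesis
  proof
    show "?K \<in> carrier_mat N m" by (fact K)
    show "set (cols ?K) \<subseteq> set (cols H)" using S(1) ss(2) cols_K by simp
    show "v = 0\<^sub>v m" if "v \<in> carrier_vec m" "?K *\<^sub>v v = 0\<^sub>v N" for v
    proof (rule ccontr)
      assume "v \<noteq> 0\<^sub>v m"
      then have "V.lin_dep (set (cols ?K))"
        using V.lin_depI[OF K that(1) _ that(2)] cols_K ss(1) by simp
      then show False using S(2) ss(2) cols_K by simp
    qed
  qed
qed

lemma square_mat_obtains_preimage:
  fixes M :: "'a::field mat"
  assumes M: "M \<in> carrier_mat m m"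
    and inj: "\<And>v. v \<in> carrier_vec m \<Longrightarrow> M *\<^sub>v v = 0\<^sub>v m \<Longrightarrow> v = 0\<^sub>v m"
    and b: "b \<in> carrier_vec m"
  obtains a where "a \<in> carrier_vec m" "M *\<^sub>v a = b"
proof -
  have "det M \<noteq> 0" using inj det_0_iff_vec_prod_zero_field[OF M] by blast
  then obtain B where B: "B \<in> carrier_mat m m" "M * B = 1\<^sub>m m"
    using det_non_zero_imp_unit[OF M, of "()"] unfolding Units_def ring_mat_def by auto
  show thesis
  proof
    show "B *\<^sub>v b \<in> carrier_vec m" using B(1) b by simp
    show "M *\<^sub>v (B *\<^sub>v b) = b" using assoc_mult_mat_vec[OF M B(1) b, symmetric] B b by simp
  qed
qed

(* The rows sel of K form a square matrix that is injective, hence invertible. *)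
lemma mult_mat_vec_onto_determined_space:
  fixes K :: "'a::field mat"
  assumes K: "K \<in> carrier_mat N m"
    and inj: "\<And>v. v \<in> carrier_vec m \<Longrightarrow> K *\<^sub>v v = 0\<^sub>v N \<Longrightarrow> v = 0\<^sub>v m"
    and into: "\<And>a. a \<in> carrier_vec m \<Longrightarrow> K *\<^sub>v a \<in> L"
    and sel: "\<And>k. k < m \<Longrightarrow> sel k < N"
    and determined: "\<And>w w'. w \<in> L \<Longrightarrow> w' \<in> L \<Longrightarrow>
      (\<And>k. k < m \<Longrightarrow> w $ sel k = w' $ sel k) \<Longrightarrow> w = w'"
    and w: "w \<in> L"
  obtains a where "a \<in> carrier_vec m" "K *\<^sub>v a = w"
proof -
  define M where "M = mat m m (\<lambda>(k, j). K $$ (sel k, j))"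
  have M: "M \<in> carrier_mat m m" unfolding M_def by simp
  have M_K: "(M *\<^sub>v a) $ k = (K *\<^sub>v a) $ sel k" if "k < m" for a k
  proof -
    have "row M k = row K (sel k)" using K sel[OF that] that by (auto simp: M_def)
    then show ?thesis using K sel[OF that] that M by simp
  qed
  have "v = 0\<^sub>v m" if v: "v \<in> carrier_vec m" "M *\<^sub>v v = 0\<^sub>v m" for v
  proof -
    have "(K *\<^sub>v v) $ sel k = (K *\<^sub>v 0\<^sub>v m) $ sel k" if "k < m" for k
    proof -
      have "(K *\<^sub>v v) $ sel k = (M *\<^sub>v v) $ k" by (rule M_K[OF that, symmetric])
      also have "\<dots> = (M *\<^sub>v 0\<^sub>v m) $ k" using v(2) M that by simp
      also have "\<dots> = (K *\<^sub>v 0\<^sub>v m) $ sel k" by (rule M_K[OF that])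
      finally show ?thesis .
    qed
    then have "K *\<^sub>v v = K *\<^sub>v 0\<^sub>v m" using determined[OF into[OF v(1)] into] by simp
    also have "\<dots> = 0\<^sub>v N" using K by (intro eq_vecI) auto
    finally show ?thesis by (rule inj[OF v(1)])
  qed
  then obtain a where a: "a \<in> carrier_vec m" "M *\<^sub>v a = vec m (\<lambda>k. w $ sel k)"
    using square_mat_obtains_preimage[OF M] by (metis vec_carrier)
  have "(K *\<^sub>v a) $ sel k = w $ sel k" if "k < m" for k
    using M_K[OF that, of a] a(2) that by simp
  then have "K *\<^sub>v a = w" by (rule determined[OF into[OF a(1)] w])
  with a(1) show thesis by (rule that)
qed

lemma mult_mat_vec_in_col_span:
  fixes K H :: "'a::field mat"
  assumes K: "K \<in> carrier_mat N m" and H: "H \<in> carrier_mat N T"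
    and sub: "set (cols K) \<subseteq> set (cols H)" and a: "a \<in> carrier_vec m"
  obtains g where "g \<in> carrier_vec T" "H *\<^sub>v g = K *\<^sub>v a"
proof -
  interpret V: vec_space "TYPE('a)" N .
  have "K *\<^sub>v a \<in> V.col_space K" using V.col_space_eq[OF K] K a by auto
  also have "V.col_space K \<subseteq> V.col_space H"
    unfolding V.col_space_def by (rule V.span_is_monotone[OF sub])
  finally show thesis using V.col_space_eq[OF H] H that by auto
qed

lemma image_mult_mat_vec_eq_of_rank:
  fixes H :: "'a::field mat"
  assumes H: "H \<in> carrier_mat N T" and cols: "set (cols H) \<subseteq> L"
    and closed: "\<And>A c a. A \<in> carrier_mat N c \<Longrightarrow> set (cols A) \<subseteq> L \<Longrightarrow> a \<in> carrier_vec c \<Longrightarrow>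
      A *\<^sub>v a \<in> L"
    and sel: "\<And>k. k < m \<Longrightarrow> sel k < N"
    and determined: "\<And>w w'. w \<in> L \<Longrightarrow> w' \<in> L \<Longrightarrow>
      (\<And>k. k < m \<Longrightarrow> w $ sel k = w' $ sel k) \<Longrightarrow> w = w'"
    and rank: "vec_space.rank N H = m"
  shows "(\<lambda>g. H *\<^sub>v g) ` carrier_vec T = L"
proof
  show "(\<lambda>g. H *\<^sub>v g) ` carrier_vec T \<subseteq> L" using closed[OF H cols] by blast
  show "L \<subseteq> (\<lambda>g. H *\<^sub>v g) ` carrier_vec T"
  proof
    fix w assume w: "w \<in> L"
    obtain K where K: "K \<in> carrier_mat N m" "set (cols K) \<subseteq> set (cols H)"
      and inj: "\<And>v. v \<in> carrier_vec m \<Longrightarrow> K *\<^sub>v v = 0\<^sub>v N \<Longrightarrow> v = 0\<^sub>v m"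
      using rank_obtains_injective_col_submatrix[OF H rank] by blast
    have into: "\<And>a. a \<in> carrier_vec m \<Longrightarrow> K *\<^sub>v a \<in> L" using closed[OF K(1)] K(2) cols by blast
    obtain a where a: "a \<in> carrier_vec m" "K *\<^sub>v a = w"
      using mult_mat_vec_onto_determined_space[of K N m L sel w] K(1) inj into sel determined w by blast
    then obtain g where "g \<in> carrier_vec T" "H *\<^sub>v g = K *\<^sub>v a"
      using mult_mat_vec_in_col_span[OF K(1) H K(2)] by blast
    then show "w \<in> (\<lambda>g. H *\<^sub>v g) ` carrier_vec T" using a(2) by (metis rev_image_eqI)
  qed
qed

lemma sum_mult_add_sum_diff:
  fixes b f :: "'j \<Rightarrow> 'a::comm_ring"
  shows "(\<Sum>j\<in>J. b j * (f j + (\<Sum>k\<in>K. g j k - s k * h j k))) =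
    (\<Sum>j\<in>J. b j * f j) + (\<Sum>k\<in>K. (\<Sum>j\<in>J. b j * g j k) - s k * (\<Sum>j\<in>J. b j * h j k))"
proof -
  have "(\<Sum>j\<in>J. b j * (\<Sum>k\<in>K. g j k - s k * h j k)) = (\<Sum>j\<in>J. \<Sum>k\<in>K. b j * g j k - s k * (b j * h j k))"
    by (simp add: sum_distrib_left algebra_simps)
  also have "\<dots> = (\<Sum>k\<in>K. (\<Sum>j\<in>J. b j * g j k) - s k * (\<Sum>j\<in>J. b j * h j k))"
    by (subst sum.swap) (simp add: sum_subtractf sum_distrib_left)
  finally show ?thesis by (simp add: distrib_left sum.distrib)
qed

lemma is_tree_parent_le: "is_tree n par \<Longrightarrow> i \<in> {1..n} \<Longrightarrow> par i \<le> n"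
  unfolding is_tree_def by blast

lemma is_tree_induct [consumes 2, case_names root parent]:
  assumes tree: "is_tree n par" and i: "i \<in> {1..n}"
    and root: "P 0" and parent: "\<And>i. i \<in> {1..n} \<Longrightarrow> P (par i) \<Longrightarrow> P i"
  shows "P i"
proof -
  obtain k where "(par ^^ k) i = 0" using tree i unfolding is_tree_def by blast
  then show ?thesis using i
  proof (induction k arbitrary: i)
    case 0
    then show ?case by simp
  next
    case (Suc k)
    have "P (par i)"
    proof (cases "par i = 0")
      case False
      then have "par i \<in> {1..n}" using is_tree_parent_le[OF tree Suc.prems(2)] by simp
      moreover have "(par ^^ k) (par i) = 0" using Suc.prems(1) by (simp add: funpow_Suc_right del: funpow.simps)
      ultimately show ?thesis by (rule Suc.IH[rotated])
    qed (simp add: root)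
    then show ?case using parent Suc.prems(2) by blast
  qed
qed

(* Coordinates of the stacked vector (u; y) = (p, q, P, Q, l, v, v0), 0-indexed: the entries of
  node i >= 1 sit at c*n + i - 1 for c = 0, ..., 5, and v0 at 6n. *)
definition volt_index :: "nat \<Rightarrow> nat \<Rightarrow> nat" where
  "volt_index n j = (if j = 0 then 6*n else 5*n + j - 1)"

definition distflow_linear ::
  "nat \<Rightarrow> (nat \<Rightarrow> nat) \<Rightarrow> (nat \<Rightarrow> real) \<Rightarrow> (nat \<Rightarrow> real) \<Rightarrow> (nat \<Rightarrow> real) \<Rightarrow> bool" where
  "distflow_linear n par r x e \<longleftrightarrow> (\<forall>i\<in>{1..n}.
     e (2*n+i-1) = e (i-1) + (\<Sum>k\<in>{k\<in>{1..n}. par k = i}. e (2*n+k-1) - r k * e (4*n+k-1)) \<and>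
     e (3*n+i-1) = e (n+i-1) + (\<Sum>k\<in>{k\<in>{1..n}. par k = i}. e (3*n+k-1) - x k * e (4*n+k-1)) \<and>
     e (volt_index n (par i)) = e (5*n+i-1) - 2 * (r i * e (2*n+i-1) + x i * e (3*n+i-1))
       + ((r i)^2 + (x i)^2) * e (4*n+i-1))"

lemma distflow_linearD:
  assumes "distflow_linear n par r x e" and "i \<in> {1..n}"
  shows "e (2*n+i-1) = e (i-1) + (\<Sum>k\<in>{k\<in>{1..n}. par k = i}. e (2*n+k-1) - r k * e (4*n+k-1))"
    and "e (3*n+i-1) = e (n+i-1) + (\<Sum>k\<in>{k\<in>{1..n}. par k = i}. e (3*n+k-1) - x k * e (4*n+k-1))"
    and "e (volt_index n (par i)) = e (5*n+i-1) - 2 * (r i * e (2*n+i-1) + x i * e (3*n+i-1))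
      + ((r i)^2 + (x i)^2) * e (4*n+i-1)"
  using assms unfolding distflow_linear_def by blast+

lemma stacked_coordinates:
  assumes u: "u \<in> carrier_vec (2*n)" and y: "y \<in> carrier_vec (4*n+1)" and i: "i \<in> {1..n}"
  shows "pp n u i = (u @\<^sub>v y) $ (i-1)" "qq n u i = (u @\<^sub>v y) $ (n+i-1)"
    "PP n y i = (u @\<^sub>v y) $ (2*n+i-1)" "QQ n y i = (u @\<^sub>v y) $ (3*n+i-1)"
    "LL n y i = (u @\<^sub>v y) $ (4*n+i-1)" "VV n y i = (u @\<^sub>v y) $ (5*n+i-1)"
  using u y i by (auto simp: pp_def qq_def PP_def QQ_def LL_def VV_def)

lemma stacked_volt:
  assumes u: "u \<in> carrier_vec (2*n)" and y: "y \<in> carrier_vec (4*n+1)" and j: "j \<le> n"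
  shows "volt n y j = (u @\<^sub>v y) $ volt_index n j"
  using u y j by (auto simp: volt_def volt_index_def V0_def VV_def)

lemma B_DF_iff_distflow_linear:
  assumes tree: "is_tree n par" and u: "u \<in> carrier_vec (2*n)" and y: "y \<in> carrier_vec (4*n+1)"
  shows "(u, y) \<in> B_DF n par r x \<longleftrightarrow> distflow_linear n par r x (($) (u @\<^sub>v y)) \<and>
     (\<forall>i\<in>{1..n}. LL n y i * VV n y i = (PP n y i)^2 + (QQ n y i)^2)"
proof -
  let ?e = "($) (u @\<^sub>v y)"
  have flows: "(\<Sum>k\<in>{k\<in>{1..n}. par k = i}. PP n y k - r k * LL n y k) =
      (\<Sum>k\<in>{k\<in>{1..n}. par k = i}. ?e (2*n+k-1) - r k * ?e (4*n+k-1))"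
    "(\<Sum>k\<in>{k\<in>{1..n}. par k = i}. QQ n y k - x k * LL n y k) =
      (\<Sum>k\<in>{k\<in>{1..n}. par k = i}. ?e (3*n+k-1) - x k * ?e (4*n+k-1))" for i
    by (auto simp: stacked_coordinates[OF u y] intro!: sum.cong)
  show ?thesis
    using u y is_tree_parent_le[OF tree]
    by (auto simp: B_DF_def distflow_linear_def flows stacked_coordinates[OF u y] stacked_volt[OF u y])
qed

lemma distflow_linear_cong:
  assumes tree: "is_tree n par" and e: "\<And>m. m < 6*n+1 \<Longrightarrow> e m = e' m"
  shows "distflow_linear n par r x e \<longleftrightarrow> distflow_linear n par r x e'"
proof -
  have flows: "(\<Sum>k\<in>{k\<in>{1..n}. par k = i}. e (2*n+k-1) - r k * e (4*n+k-1)) =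
      (\<Sum>k\<in>{k\<in>{1..n}. par k = i}. e' (2*n+k-1) - r k * e' (4*n+k-1))"
    "(\<Sum>k\<in>{k\<in>{1..n}. par k = i}. e (3*n+k-1) - x k * e (4*n+k-1)) =
      (\<Sum>k\<in>{k\<in>{1..n}. par k = i}. e' (3*n+k-1) - x k * e' (4*n+k-1))" for i
    by (auto simp: e intro!: sum.cong)
  have node: "e (i-1) = e' (i-1)" "e (n+i-1) = e' (n+i-1)" "e (2*n+i-1) = e' (2*n+i-1)"
    "e (3*n+i-1) = e' (3*n+i-1)" "e (4*n+i-1) = e' (4*n+i-1)" "e (5*n+i-1) = e' (5*n+i-1)"
    "e (volt_index n (par i)) = e' (volt_index n (par i))" if "i \<in> {1..n}" for i
    using that is_tree_parent_le[OF tree that] by (auto intro!: e simp: volt_index_def)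
  show ?thesis
    unfolding distflow_linear_def flows using node by simp
qed

lemma distflow_linear_sum:
  assumes "\<And>j. j \<in> J \<Longrightarrow> distflow_linear n par r x (e j)"
  shows "distflow_linear n par r x (\<lambda>m. \<Sum>j\<in>J. b j * e j m)"
  unfolding distflow_linear_def
proof (intro ballI conjI)
  fix i assume i: "i \<in> {1..n}"
  note eqs = assms[unfolded distflow_linear_def, rule_format, OF _ i]
  show "(\<Sum>j\<in>J. b j * e j (2*n+i-1)) = (\<Sum>j\<in>J. b j * e j (i-1)) +
     (\<Sum>k\<in>{k\<in>{1..n}. par k = i}. (\<Sum>j\<in>J. b j * e j (2*n+k-1)) - r k * (\<Sum>j\<in>J. b j * e j (4*n+k-1)))"
    using eqs by (simp add: sum_mult_add_sum_diff[symmetric] cong: sum.cong)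
  show "(\<Sum>j\<in>J. b j * e j (3*n+i-1)) = (\<Sum>j\<in>J. b j * e j (n+i-1)) +
     (\<Sum>k\<in>{k\<in>{1..n}. par k = i}. (\<Sum>j\<in>J. b j * e j (3*n+k-1)) - x k * (\<Sum>j\<in>J. b j * e j (4*n+k-1)))"
    using eqs by (simp add: sum_mult_add_sum_diff[symmetric] cong: sum.cong)
  show "(\<Sum>j\<in>J. b j * e j (volt_index n (par i))) = (\<Sum>j\<in>J. b j * e j (5*n+i-1))
     - 2 * (r i * (\<Sum>j\<in>J. b j * e j (2*n+i-1)) + x i * (\<Sum>j\<in>J. b j * e j (3*n+i-1)))
     + ((r i)^2 + (x i)^2) * (\<Sum>j\<in>J. b j * e j (4*n+i-1))"
  proof -
    have "(\<Sum>j\<in>J. b j * e j (volt_index n (par i))) = (\<Sum>j\<in>J. b j * (e j (5*n+i-1)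
        - 2 * (r i * e j (2*n+i-1) + x i * e j (3*n+i-1)) + ((r i)^2 + (x i)^2) * e j (4*n+i-1)))"
      using eqs by (intro sum.cong) auto
    then show ?thesis by (simp add: sum_distrib_left sum.distrib sum_subtractf algebra_simps)
  qed
qed

lemma distflow_linear_mult_mat_vec:
  assumes tree: "is_tree n par"
    and A: "A \<in> carrier_mat (6*n+1) c" and a: "a \<in> carrier_vec c"
    and cols: "\<And>j. j < c \<Longrightarrow> distflow_linear n par r x (($) (col A j))"
  shows "distflow_linear n par r x (($) (A *\<^sub>v a))"
proof -
  have "distflow_linear n par r x (\<lambda>m. \<Sum>j<c. a $ j * col A j $ m)"
    using cols by (intro distflow_linear_sum) auto
  moreover have "distflow_linear n par r x (($) (A *\<^sub>v a)) \<longleftrightarrow>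
      distflow_linear n par r x (\<lambda>m. \<Sum>j<c. a $ j * col A j $ m)"
    by (rule distflow_linear_cong[OF tree]) (use index_mult_mat_vec_sum[OF A a] in auto)
  ultimately show ?thesis by blast
qed

lemma distflow_linear_volts_determined:
  assumes tree: "is_tree n par"
    and e: "distflow_linear n par r x e" and e': "distflow_linear n par r x e'"
    and flows: "\<And>m. 2*n \<le> m \<Longrightarrow> m < 5*n \<Longrightarrow> e m = e' m" and slack: "e (6*n) = e' (6*n)"
    and j: "j \<in> {1..n}"
  shows "e (volt_index n j) = e' (volt_index n j)"
  using tree j
proof (induction rule: is_tree_induct)
  case root
  then show ?case using slack by (simp add: volt_index_def)
next
  case (parent i)
  have branch: "e (2*n+i-1) = e' (2*n+i-1)" "e (3*n+i-1) = e' (3*n+i-1)" "e (4*n+i-1) = e' (4*n+i-1)"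
    using parent(1) by (auto intro!: flows)
  have node: "volt_index n i = 5*n+i-1" using parent(1) by (simp add: volt_index_def)
  show ?case
    using distflow_linearD(3)[OF e parent(1)] distflow_linearD(3)[OF e' parent(1)] parent(2)
    unfolding node branch by linarith
qed

lemma distflow_linear_determined:
  assumes tree: "is_tree n par"
    and e: "distflow_linear n par r x e" and e': "distflow_linear n par r x e'"
    and flows: "\<And>m. 2*n \<le> m \<Longrightarrow> m < 5*n \<Longrightarrow> e m = e' m" and slack: "e (6*n) = e' (6*n)"
    and m: "m < 6*n+1"
  shows "e m = e' m"
proof -
  have branch: "e (2*n+i-1) = e' (2*n+i-1)" "e (3*n+i-1) = e' (3*n+i-1)" "e (4*n+i-1) = e' (4*n+i-1)"
    if "i \<in> {1..n}" for i
    using that by (auto intro!: flows)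
  have children: "(\<Sum>k\<in>{k\<in>{1..n}. par k = i}. e (2*n+k-1) - r k * e (4*n+k-1)) =
      (\<Sum>k\<in>{k\<in>{1..n}. par k = i}. e' (2*n+k-1) - r k * e' (4*n+k-1))"
    "(\<Sum>k\<in>{k\<in>{1..n}. par k = i}. e (3*n+k-1) - x k * e (4*n+k-1)) =
      (\<Sum>k\<in>{k\<in>{1..n}. par k = i}. e' (3*n+k-1) - x k * e' (4*n+k-1))" for i
    using branch by (auto intro!: sum.cong)
  have loads: "e (i-1) = e' (i-1)" "e (n+i-1) = e' (n+i-1)" if i: "i \<in> {1..n}" for i
    using distflow_linearD(1,2)[OF e i] distflow_linearD(1,2)[OF e' i] branch[OF i] children[of i]
    by linarith+
  consider "m < n" | "n \<le> m" "m < 2*n" | "2*n \<le> m" "m < 5*n" | "5*n \<le> m" "m < 6*n" | "m = 6*n"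
    using m by linarith
  then show ?thesis
  proof cases
    case 1
    then show ?thesis using loads(1)[of "m+1"] by simp
  next
    case 2
    then show ?thesis using loads(2)[of "m-n+1"] by simp
  next
    case 3
    then show ?thesis by (rule flows)
  next
    case 4
    then show ?thesis
      using distflow_linear_volts_determined[OF tree e e' flows slack, of "m-5*n+1"]
      by (simp add: volt_index_def)
  qed (use slack in simp)
qed

(* Positions of (P, Q, l, v0), the 3n+1 coordinates that determine a solution of (1)-(3). *)
definition determining_coord :: "nat \<Rightarrow> nat \<Rightarrow> nat" where
  "determining_coord n k = (if k < 3*n then 2*n + k else 6*n)"

lemma distflow_linear_vec_eqI:
  assumes tree: "is_tree n par"
    and w: "w \<in> carrier_vec (6*n+1)" "distflow_linear n par r x (($) w)"
    and w': "w' \<in> carrier_vec (6*n+1)" "distflow_linear n par r x (($) w')"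
    and agree: "\<And>k. k < 3*n+1 \<Longrightarrow> w $ determining_coord n k = w' $ determining_coord n k"
  shows "w = w'"
proof (rule eq_vecI)
  have flows: "w $ m = w' $ m" if "2*n \<le> m" "m < 5*n" for m
  proof -
    have "m - 2*n < 3*n" "determining_coord n (m - 2*n) = m" using that by (auto simp: determining_coord_def)
    then show ?thesis using agree[of "m - 2*n"] by simp
  qed
  have slack: "w $ (6*n) = w' $ (6*n)" using agree[of "3*n"] by (simp add: determining_coord_def)
  show "w $ m = w' $ m" if "m < dim_vec w'" for m
    using distflow_linear_determined[OF tree w(2) w'(2) flows slack] w' that by simp
  show "dim_vec w = dim_vec w'" using w w' by simp
qed

lemma col_data_mat:
  assumes "t < T" and "ud t \<in> carrier_vec (2*n)" and "yd t \<in> carrier_vec (4*n+1)"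
  shows "col (data_mat n T ud yd) t = ud t @\<^sub>v yd t"
  using assms unfolding data_mat_def by (auto intro!: eq_vecI)

lemma distflow_linear_space_eq_data_image:
  assumes tree: "is_tree n par"
    and data: "\<forall>t<T. (ud t, yd t) \<in> B_DF n par r x"
    and rank: "vec_space.rank (6*n+1) (data_mat n T ud yd) = 3*n+1"
  shows "(\<lambda>g. data_mat n T ud yd *\<^sub>v g) ` carrier_vec T =
    {w \<in> carrier_vec (6*n+1). distflow_linear n par r x (($) w)}" (is "_ = ?L")
proof (rule image_mult_mat_vec_eq_of_rank[where sel = "determining_coord n", OF _ _ _ _ _ rank])
  let ?H = "data_mat n T ud yd"
  show H: "?H \<in> carrier_mat (6*n+1) T" by (simp add: data_mat_def)
  show "set (cols ?H) \<subseteq> ?L"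
  proof
    fix w assume "w \<in> set (cols ?H)"
    then obtain t where t: "t < T" "w = col ?H t" using H by (auto simp: cols_def)
    have u: "ud t \<in> carrier_vec (2*n)" and y: "yd t \<in> carrier_vec (4*n+1)"
      using data t(1) by (auto simp: B_DF_def)
    have "ud t @\<^sub>v yd t \<in> carrier_vec (6*n+1)" using append_carrier_vec[OF u y] by simp
    then show "w \<in> ?L"
      using t col_data_mat[where ud = ud and yd = yd, OF t(1) u y] B_DF_iff_distflow_linear[OF tree u y] data by auto
  qed
  show "A *\<^sub>v a \<in> ?L" if A: "A \<in> carrier_mat (6*n+1) c" and cols: "set (cols A) \<subseteq> ?L"
    and a: "a \<in> carrier_vec c" for A c a
  proof -
    have "distflow_linear n par r x (($) (col A j))" if "j < c" for j
    proof -
      have "col A j \<in> set (cols A)" using A that by (simp add: cols_def)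
      then show ?thesis using cols by blast
    qed
    then show ?thesis using distflow_linear_mult_mat_vec[OF tree A a] mult_mat_vec_carrier[OF A a] by simp
  qed
  show "determining_coord n k < 6*n+1" for k
    by (simp add: determining_coord_def)
  show "w = w'" if "w \<in> ?L" "w' \<in> ?L"
    "\<And>k. k < 3*n+1 \<Longrightarrow> w $ determining_coord n k = w' $ determining_coord n k" for w w'
    using that by (intro distflow_linear_vec_eqI[OF tree]) auto
qed

theorem lemma2:
  fixes n T :: nat and par :: "nat \<Rightarrow> nat" and r x :: "nat \<Rightarrow> real"
    and ud yd :: "nat \<Rightarrow> real vec" and u y :: "real vec"
  assumes tree: "is_tree n par"
    and lines: "line_params n r x"
    and T: "T > 1"
    and data: "\<forall>t<T. (ud t, yd t) \<in> B_DF n par r x"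
    and rank: "vec_space.rank (6*n+1) (data_mat n T ud yd) = 3*n+1"
    and u: "u \<in> carrier_vec (2*n)" and y: "y \<in> carrier_vec (4*n+1)"
  shows "(u, y) \<in> B_DF n par r x \<longleftrightarrow>
    (\<exists>g \<in> carrier_vec T. u @\<^sub>v y = data_mat n T ud yd *\<^sub>v g \<and>
       (\<forall>i\<in>{1..n}. VV n y i * LL n y i = PP n y i * PP n y i + QQ n y i * QQ n y i))"
proof -
  have "u @\<^sub>v y \<in> carrier_vec (6*n+1)" using append_carrier_vec[OF u y] by simp
  then have "(u, y) \<in> B_DF n par r x \<longleftrightarrow>
      u @\<^sub>v y \<in> {w \<in> carrier_vec (6*n+1). distflow_linear n par r x (($) w)} \<and>
      (\<forall>i\<in>{1..n}. LL n y i * VV n y i = (PP n y i)^2 + (QQ n y i)^2)"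
    using B_DF_iff_distflow_linear[OF tree u y] by simp
  also have "\<dots> \<longleftrightarrow> u @\<^sub>v y \<in> (\<lambda>g. data_mat n T ud yd *\<^sub>v g) ` carrier_vec T \<and>
      (\<forall>i\<in>{1..n}. VV n y i * LL n y i = PP n y i * PP n y i + QQ n y i * QQ n y i)"
    unfolding distflow_linear_space_eq_data_image[OF tree data rank]
    by (simp add: power2_eq_square mult.commute)
  finally show ?thesis by (auto simp: eq_commute[of "u @\<^sub>v y"])
qed

end
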